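(* Let $G$ be a graph with no isolated vertices. For every integer $\ell$ with $\gamma_t(G)\le \ell \le \gamma_{\rm gr}^t(G)$ there is a total dominating sequence of $G$ of length $\ell$.
   Context: $\gamma_t(G)$ is the minimum size of a set $D$ such that every vertex of $G$ has a neighbor in $D$. $N(v)$ denotes the open neighborhood of $v$. A sequence $S=(v_1,\ldots,v_k)$ of distinct vertices is a legal sequence if $N(v_i)\setminus \bigcup_{j=1}^{i-1} N(v_j)\neq\emptyset$ for every $i\in\{2,\ldots,k\}$, and a total dominating sequence if moreover $\{v_1,\ldots,v_k\}$ is a total dominating set of $G$. $\gamma_{\rm gr}^t(G)$ is the maximum length of a total dominating sequence of $G$. *)

theory Defs
  imports Main
begin

definition graph :: "'a set \<Rightarrow> ('a \<Rightarrow> 'a \<Rightarrow> bool) \<Rightarrow> bool" where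
  "graph V E \<longleftrightarrow> finite V \<and> (\<forall>u v. E u v \<longrightarrow> u \<in> V \<and> v \<in> V)
     \<and> (\<forall>u v. E u v \<longrightarrow> E v u) \<and> (\<forall>v. \<not> E v v)"

definition no_isolated :: "'a set \<Rightarrow> ('a \<Rightarrow> 'a \<Rightarrow> bool) \<Rightarrow> bool" where
  "no_isolated V E \<longleftrightarrow> (\<forall>v\<in>V. \<exists>u\<in>V. E v u)"

definition nbhd :: "'a set \<Rightarrow> ('a \<Rightarrow> 'a \<Rightarrow> bool) \<Rightarrow> 'a \<Rightarrow> 'a set" where
  "nbhd V E v = {u \<in> V. E v u}"

definition total_dominating_set :: "'a set \<Rightarrow> ('a \<Rightarrow> 'a \<Rightarrow> bool) \<Rightarrow> 'a set \<Rightarrow> bool" where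
  "total_dominating_set V E D \<longleftrightarrow> D \<subseteq> V \<and> (\<forall>v\<in>V. \<exists>d\<in>D. E v d)"

definition gamma_t :: "'a set \<Rightarrow> ('a \<Rightarrow> 'a \<Rightarrow> bool) \<Rightarrow> nat" where
  "gamma_t V E = Min {card D | D. total_dominating_set V E D}"

definition legal_sequence :: "'a set \<Rightarrow> ('a \<Rightarrow> 'a \<Rightarrow> bool) \<Rightarrow> 'a list \<Rightarrow> bool" where
  "legal_sequence V E S \<longleftrightarrow> distinct S \<and> set S \<subseteq> V \<and>
     (\<forall>i. 1 \<le> i \<and> i < length S \<longrightarrow>
        nbhd V E (S ! i) - (\<Union>j<i. nbhd V E (S ! j)) \<noteq> {})"

definition total_dominating_sequence :: "'a set \<Rightarrow> ('a \<Rightarrow> 'a \<Rightarrow> bool) \<Rightarrow> 'a list \<Rightarrow> bool" where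
  "total_dominating_sequence V E S \<longleftrightarrow>
     legal_sequence V E S \<and> total_dominating_set V E (set S)"

definition gamma_gr_t :: "'a set \<Rightarrow> ('a \<Rightarrow> 'a \<Rightarrow> bool) \<Rightarrow> nat" where
  "gamma_gr_t V E = Max {length S | S. total_dominating_sequence V E S}"

end

theory Submission
  imports Defs
begin

text \<open>Let \<open>D\<close> be a minimum total dominating set and \<open>S\<close> a longest total dominating
  sequence. For each \<open>i\<close>, extend the prefix \<open>S\<^sub>i\<close> of length \<open>i\<close> greedily by those
  vertices of \<open>D\<close> (in a fixed order) whose neighbourhood is not yet covered. The result is
  again a total dominating sequence, because \<open>D\<close> dominates and every skipped vertex adds
  nothing. Its length is at most \<open>|D|\<close> for \<open>i = 0\<close>, at least \<open>|S|\<close> for \<open>i = |S|\<close>, and grows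
  by at most one when \<open>i\<close> increases, since a larger prefix covers more. Hence every
  intermediate length is attained.\<close>

fun greedy_extension :: "('a \<Rightarrow> 'b set) \<Rightarrow> 'b set \<Rightarrow> 'a list \<Rightarrow> 'a list" where
  "greedy_extension N X [] = []"
| "greedy_extension N X (d # ds) =
     (if N d \<subseteq> X then greedy_extension N X ds
      else d # greedy_extension N (X \<union> N d) ds)"

lemma length_greedy_extension_antimono:
  "X \<subseteq> Y \<Longrightarrow> length (greedy_extension N Y ds) \<le> length (greedy_extension N X ds)"
proof (induction ds arbitrary: X Y)
  case Nil
  then show ?case by simp
next
  case (Cons d ds)
  show ?case
  proof (cases "N d \<subseteq> Y")
    case True
    then show ?thesis
      using Cons.IH[of X Y] Cons.IH[of "X \<union> N d" Y] Cons.prems by (auto simp: le_SucI)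
  next
    case False
    then show ?thesis using Cons.IH[of "X \<union> N d" "Y \<union> N d"] Cons.prems by auto
  qed
qed

lemma length_greedy_extension_le: "length (greedy_extension N X ds) \<le> length ds"
  by (induction ds arbitrary: X) (auto simp: le_SucI)

lemma set_greedy_extension_subset: "set (greedy_extension N X ds) \<subseteq> set ds"
  by (induction ds arbitrary: X) auto

lemma length_prefix_greedy_extension_Suc_le:
  "length (take (Suc i) S @ greedy_extension N (\<Union>(N ` set (take (Suc i) S))) ds)
     \<le> Suc (length (take i S @ greedy_extension N (\<Union>(N ` set (take i S))) ds))"
proof -
  have "\<Union>(N ` set (take i S)) \<subseteq> \<Union>(N ` set (take (Suc i) S))"
    using set_take_subset_set_take[of i "Suc i" S] by auto
  from length_greedy_extension_antimono[OF this, of N ds]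
  show ?thesis by (auto simp: min_def)
qed

lemma greedy_extension_not_covered:
  "d \<in> set (greedy_extension N X ds) \<Longrightarrow> \<not> N d \<subseteq> X"
  by (induction ds arbitrary: X) (auto split: if_splits)

lemma distinct_greedy_extension: "distinct (greedy_extension N X ds)"
  by (induction ds arbitrary: X) (auto dest: greedy_extension_not_covered)

lemma greedy_extension_covers:
  "d \<in> set ds \<Longrightarrow> N d \<subseteq> X \<union> \<Union>(N ` set (greedy_extension N X ds))"
proof (induction ds arbitrary: X)
  case Nil
  then show ?case by simp
next
  case (Cons a ds)
  show ?case
  proof (cases "d = a")
    case True
    then show ?thesis by auto
  next
    case False
    with Cons.prems have "d \<in> set ds" by simp
    then show ?thesis using Cons.IH[of X] Cons.IH[of "X \<union> N a"] by auto
  qed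
qed

lemma greedy_extension_nth_not_covered:
  assumes "k < length (greedy_extension N X ds)"
  shows "\<not> N (greedy_extension N X ds ! k)
           \<subseteq> X \<union> \<Union>(N ` set (take k (greedy_extension N X ds)))"
  using assms
proof (induction ds arbitrary: X k)
  case Nil
  then show ?case by simp
next
  case (Cons d ds)
  show ?case
  proof (cases "N d \<subseteq> X")
    case True
    then show ?thesis using Cons by simp
  next
    case False
    then show ?thesis
      using Cons.IH[of "k - 1" "X \<union> N d"] Cons.prems by (cases k) auto
  qed
qed

lemma legal_sequence_iff_take:
  "legal_sequence V E S \<longleftrightarrow> distinct S \<and> set S \<subseteq> V \<and>
     (\<forall>i. 1 \<le> i \<and> i < length S \<longrightarrow>
        nbhd V E (S ! i) - \<Union>(nbhd V E ` set (take i S)) \<noteq> {})"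
proof -
  have "(\<Union>j<i. nbhd V E (S ! j)) = \<Union>(nbhd V E ` set (take i S))" if "i < length S" for i
  proof -
    have "set (take i S) = (!) S ` {..<i}"
      using that by (simp add: nth_image lessThan_atLeast0)
    then show ?thesis by simp
  qed
  then show ?thesis unfolding legal_sequence_def by auto
qed

lemma legal_sequence_take: "legal_sequence V E S \<Longrightarrow> legal_sequence V E (take i S)"
  unfolding legal_sequence_iff_take by (auto simp: take_take dest: in_set_takeD)

lemma legal_sequence_append_greedy_extension:
  assumes "legal_sequence V E P" and "set ds \<subseteq> V"
  shows "legal_sequence V E (P @ greedy_extension (nbhd V E) (\<Union>(nbhd V E ` set P)) ds)"
    (is "legal_sequence V E (P @ ?G)")
proof -
  let ?N = "nbhd V E"
  have P: "distinct P" "set P \<subseteq> V"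
    "\<And>i. 1 \<le> i \<Longrightarrow> i < length P \<Longrightarrow> ?N (P ! i) - \<Union>(?N ` set (take i P)) \<noteq> {}"
    using assms(1) unfolding legal_sequence_iff_take by auto
  have "set P \<inter> set ?G = {}"
    using greedy_extension_not_covered[of _ ?N] by fastforce
  then have "distinct (P @ ?G)"
    using P(1) distinct_greedy_extension by auto
  moreover have "set (P @ ?G) \<subseteq> V"
    using P(2) set_greedy_extension_subset assms(2) by fastforce
  moreover have "?N ((P @ ?G) ! m) - \<Union>(?N ` set (take m (P @ ?G))) \<noteq> {}"
    if m: "1 \<le> m" "m < length (P @ ?G)" for m
  proof (cases "m < length P")
    case True
    then show ?thesis using P(3)[of m] m by (simp add: nth_append)
  next
    case False
    then obtain k where "m = length P + k" "k < length ?G"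
      using m(2) le_Suc_ex by (metis add_less_cancel_left length_append not_le)
    then show ?thesis
      using greedy_extension_nth_not_covered[of k ?N] by (auto simp: nth_append)
  qed
  ultimately show ?thesis unfolding legal_sequence_iff_take by blast
qed

lemma total_dominating_set_greedy_extension:
  assumes "graph V E" and "total_dominating_set V E (set ds)" and "P \<subseteq> V"
  shows "total_dominating_set V E (P \<union> set (greedy_extension (nbhd V E) (\<Union>(nbhd V E ` P)) ds))"
    (is "total_dominating_set V E (P \<union> set ?G)")
  unfolding total_dominating_set_def
proof (intro conjI ballI)
  let ?N = "nbhd V E"
  show "P \<union> set ?G \<subseteq> V"
    using assms(2,3) set_greedy_extension_subset unfolding total_dominating_set_def by fastforce
  fix v
  assume "v \<in> V"
  then obtain d where "d \<in> set ds" "E v d"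
    using assms(2) unfolding total_dominating_set_def by auto
  with \<open>v \<in> V\<close> assms(1) have "v \<in> ?N d"
    unfolding graph_def nbhd_def by auto
  then have "v \<in> \<Union>(?N ` P) \<union> \<Union>(?N ` set ?G)"
    using greedy_extension_covers[OF \<open>d \<in> set ds\<close>, of ?N "\<Union>(?N ` P)"] by blast
  then obtain d' where "d' \<in> P \<union> set ?G" "v \<in> ?N d'"
    by blast
  moreover from \<open>v \<in> ?N d'\<close> assms(1) have "E v d'"
    unfolding graph_def nbhd_def by auto
  ultimately show "\<exists>d\<in>P \<union> set ?G. E v d" by blast
qed

lemma total_dominating_sequence_append_greedy_extension:
  assumes "graph V E" and "total_dominating_set V E (set ds)" and "legal_sequence V E P"
  shows "total_dominating_sequence V E
           (P @ greedy_extension (nbhd V E) (\<Union>(nbhd V E ` set P)) ds)"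
proof -
  have "set ds \<subseteq> V" "set P \<subseteq> V"
    using assms(2,3) unfolding total_dominating_set_def legal_sequence_def by auto
  then show ?thesis
    using assms legal_sequence_append_greedy_extension total_dominating_set_greedy_extension
    unfolding total_dominating_sequence_def by fastforce
qed

lemma gamma_t_attained:
  assumes "graph V E" and "no_isolated V E"
  obtains D where "total_dominating_set V E D" and "card D = gamma_t V E"
proof -
  have "{card D | D. total_dominating_set V E D} \<subseteq> card ` Pow V"
    unfolding total_dominating_set_def by auto
  then have "finite {card D | D. total_dominating_set V E D}"
    using assms(1) finite_subset unfolding graph_def by blast
  moreover have "total_dominating_set V E V"
    using assms unfolding no_isolated_def total_dominating_set_def graph_def by blast
  ultimately have "gamma_t V E \<in> {card D | D. total_dominating_set V E D}"
    unfolding gamma_t_def by (intro Min_in) auto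
  then show ?thesis using that by auto
qed

lemma length_legal_sequence_le_card:
  assumes "graph V E" and "legal_sequence V E S"
  shows "length S \<le> card V"
  using assms card_mono distinct_card unfolding graph_def legal_sequence_def by metis

lemma gamma_gr_t_attained:
  assumes "graph V E" and "total_dominating_sequence V E S\<^sub>0"
  obtains S where "total_dominating_sequence V E S" and "length S = gamma_gr_t V E"
proof -
  have "{length S | S. total_dominating_sequence V E S} \<subseteq> {..card V}"
    using length_legal_sequence_le_card[OF assms(1)]
    unfolding total_dominating_sequence_def by auto
  then have "gamma_gr_t V E \<in> {length S | S. total_dominating_sequence V E S}"
    unfolding gamma_gr_t_def using assms(2) finite_subset by (intro Max_in) auto
  then show ?thesis using that by auto
qed

lemma nat_intermediate_value_Suc_le:
  fixes f :: "nat \<Rightarrow> nat"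
  assumes "\<And>i. f (Suc i) \<le> Suc (f i)" and "f 0 \<le> l" and "l \<le> f k"
  shows "\<exists>i\<le>k. f i = l"
  using assms(3)
proof (induction k)
  case 0
  then show ?case using assms(2) by auto
next
  case (Suc k)
  show ?case
  proof (cases "l \<le> f k")
    case True
    then show ?thesis using Suc.IH by (auto intro: le_SucI)
  next
    case False
    then have "f (Suc k) = l" using Suc.prems assms(1)[of k] by linarith
    then show ?thesis by blast
  qed
qed

theorem mainTheorem17:
  fixes V :: "'a set" and E :: "'a \<Rightarrow> 'a \<Rightarrow> bool" and l :: nat
  assumes "graph V E"
    and "no_isolated V E"
    and "gamma_t V E \<le> l" and "l \<le> gamma_gr_t V E"
  shows "\<exists>S. total_dominating_sequence V E S \<and> length S = l"
proof -
  obtain D where D: "total_dominating_set V E D" "card D = gamma_t V E"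
    using gamma_t_attained[OF assms(1,2)] .
  moreover have "finite D"
    using D(1) assms(1) finite_subset unfolding total_dominating_set_def graph_def by blast
  ultimately obtain ds where ds: "total_dominating_set V E (set ds)" "length ds = gamma_t V E"
    by (metis distinct_card finite_distinct_list)
  define T where "T S i = take i S @ greedy_extension (nbhd V E) (\<Union>(nbhd V E ` set (take i S))) ds"
    for S i
  have T_tds: "total_dominating_sequence V E (T S i)" if "legal_sequence V E S" for S i
    unfolding T_def
    by (intro total_dominating_sequence_append_greedy_extension assms(1) ds(1)
        legal_sequence_take that)
  have "legal_sequence V E []"
    unfolding legal_sequence_def by simp
  then obtain S where S: "total_dominating_sequence V E S" "length S = gamma_gr_t V E"
    using gamma_gr_t_attained[OF assms(1) T_tds] by blast
  have "length (T S (Suc i)) \<le> Suc (length (T S i))" for i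
    unfolding T_def by (rule length_prefix_greedy_extension_Suc_le)
  moreover have "length (T S 0) \<le> l"
    using length_greedy_extension_le[of "nbhd V E" "{}" ds] ds(2) assms(3) by (simp add: T_def)
  moreover have "l \<le> length (T S (length S))"
    using S(2) assms(4) by (simp add: T_def)
  ultimately obtain i where "length (T S i) = l"
    using nat_intermediate_value_Suc_le[of "\<lambda>i. length (T S i)"] by blast
  then show ?thesis
    using T_tds S(1) unfolding total_dominating_sequence_def by blast
qed

end
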